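(* Let $G$ be a finite abelian group, $\mathcal M=(M,\preceq)$ a $\hat G$-linear monoid with partial order satisfying conditions (1)–(3) below, and $k$ a field. Then the extension of scalars functor $-\otimes k:\mathrm{Rep}(M,\hat G)\to k[M]\text{-}\mathrm{mod}$ restricts to a functor $-\otimes k:\mathrm{Rep}(\mathcal M,\hat G)\to k[\mathcal M]\text{-}\mathrm{mod}$.
   Context: $\hat G=G\sqcup\{0\}$ with $0$ absorbing. $\mathrm{Vect}_{\hat G}$: objects are finite pointed sets with an action of $\hat G$ ($0v=0$, $g0=0$) such that $G$ acts freely on nonzero elements; morphisms $f$ satisfy $f(0)=0$, $f(gv)=gf(v)$, $f(v_1)=f(v_2)\neq0\Rightarrow Gv_1=Gv_2$. A $\hat G$-linear monoid is a finite monoid $M$ with absorbing element $0_M$ containing $G$ as a subgroup of units commuting with all of $M$, with $G$ acting freely by translation on $M\setminus\{0_M\}$. $\mathrm{Rep}(M,\hat G)$: objects $V$ of $\mathrm{Vect}_{\hat G}$ with an action $a\mapsto V(a)$ of $M$ by morphisms of $\mathrm{Vect}_{\hat G}$, $0_M$ acting as zero and $g\in G$ as scalar $g$. On $\mathrm{End}_{\hat G}(V)$: $A\le B$ iff for all $x$, $Ax\neq0\Rightarrow Bx=Ax$. $\preceq$ is a partial order on $M$ with: (1) $0_M$ the unique minimal element; (2) whenever $\bigvee_{a\in I}a$ exists, $x(\bigvee a)=\bigvee xa$ and $(\bigvee a)x=\bigvee ax$ for all $x$; (3) the same for meets. $\mathrm{Rep}(\mathcal M,\hat G)$ is the full subcategory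 of $V\in\mathrm{Rep}(M,\hat G)$ such that whenever $\bigvee_{a\in I}a$ exists in $M$, $\bigvee_{a\in I}V(a)$ exists in $\mathrm{End}_{\hat G}(V)$ and equals $V(\bigvee_{a\in I}a)$. A complete system of orthogonal idempotents is a finite set $E=\{e_1,\dots,e_m\}\subseteq M$ with $e_ie_j=\delta_{ij}e_j$ and $1=\bigvee_i e_i$; $\mathcal C(M)$ is the set of these. $k[M]$ is the monoid algebra and $k[\mathcal M]=k[M]/(a-\sum_{e\in E}ae,\ a-\sum_{e\in E}ea\mid a\in M, E\in\mathcal C(M))$. For $V\in\mathrm{Rep}(M,\hat G)$, $V\otimes k$ is the $k$-vector space with basis $V\setminus\{0\}$, on which $a\in M$ acts by $v\mapsto av$ if $av\neq0$ and $v\mapsto0$ otherwise, and morphisms are extended linearly in the same way. *)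

theory Defs
  imports "HOL-Algebra.Group"
begin

definition hatG_linear_monoid :: "('m, 'b) monoid_scheme \<Rightarrow> 'm set \<Rightarrow> 'm \<Rightarrow> bool" where
  "hatG_linear_monoid M G z \<longleftrightarrow>
     monoid M \<and> finite (carrier M) \<and>
     z \<in> carrier M \<and> (\<forall>x\<in>carrier M. z \<otimes>\<^bsub>M\<^esub> x = z \<and> x \<otimes>\<^bsub>M\<^esub> z = z) \<and>
     G \<subseteq> carrier M \<and> comm_group (M\<lparr>carrier := G\<rparr>) \<and>
     (\<forall>g\<in>G. \<forall>x\<in>carrier M. g \<otimes>\<^bsub>M\<^esub> x = x \<otimes>\<^bsub>M\<^esub> g) \<and>
     (\<forall>g\<in>G. \<forall>x\<in>carrier M - {z}. g \<otimes>\<^bsub>M\<^esub> x = x \<longrightarrow> g = \<one>\<^bsub>M\<^esub>)"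

definition po_lub :: "('a \<Rightarrow> 'a \<Rightarrow> bool) \<Rightarrow> 'a set \<Rightarrow> 'a set \<Rightarrow> 'a \<Rightarrow> bool" where
  "po_lub leq S I a \<longleftrightarrow> a \<in> S \<and> (\<forall>i\<in>I. leq i a) \<and>
     (\<forall>b\<in>S. (\<forall>i\<in>I. leq i b) \<longrightarrow> leq a b)"

definition po_glb :: "('a \<Rightarrow> 'a \<Rightarrow> bool) \<Rightarrow> 'a set \<Rightarrow> 'a set \<Rightarrow> 'a \<Rightarrow> bool" where
  "po_glb leq S I a \<longleftrightarrow> a \<in> S \<and> (\<forall>i\<in>I. leq a i) \<and>
     (\<forall>b\<in>S. (\<forall>i\<in>I. leq b i) \<longrightarrow> leq b a)"

definition ordered_monoid_ok :: "('m, 'b) monoid_scheme \<Rightarrow> 'm \<Rightarrow> ('m \<Rightarrow> 'm \<Rightarrow> bool) \<Rightarrow> bool" where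
  "ordered_monoid_ok M z leq \<longleftrightarrow>
     (\<forall>x\<in>carrier M. leq x x) \<and>
     (\<forall>x\<in>carrier M. \<forall>y\<in>carrier M. leq x y \<and> leq y x \<longrightarrow> x = y) \<and>
     (\<forall>x\<in>carrier M. \<forall>y\<in>carrier M. \<forall>w\<in>carrier M. leq x y \<and> leq y w \<longrightarrow> leq x w) \<and>
     \<comment> \<open>(1) z is the unique minimal element\<close>
     (\<forall>m\<in>carrier M. (\<forall>y\<in>carrier M. leq y m \<longrightarrow> y = m) \<longleftrightarrow> m = z) \<and>
     \<comment> \<open>(2) multiplication distributes over existing joins\<close>
     (\<forall>I a. I \<subseteq> carrier M \<longrightarrow> po_lub leq (carrier M) I a \<longrightarrow>
        (\<forall>x\<in>carrier M. po_lub leq (carrier M) ((\<lambda>i. x \<otimes>\<^bsub>M\<^esub> i) ` I) (x \<otimes>\<^bsub>M\<^esub> a) \<and>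
                        po_lub leq (carrier M) ((\<lambda>i. i \<otimes>\<^bsub>M\<^esub> x) ` I) (a \<otimes>\<^bsub>M\<^esub> x))) \<and>
     \<comment> \<open>(3) multiplication distributes over existing meets\<close>
     (\<forall>I a. I \<subseteq> carrier M \<longrightarrow> po_glb leq (carrier M) I a \<longrightarrow>
        (\<forall>x\<in>carrier M. po_glb leq (carrier M) ((\<lambda>i. x \<otimes>\<^bsub>M\<^esub> i) ` I) (x \<otimes>\<^bsub>M\<^esub> a) \<and>
                        po_glb leq (carrier M) ((\<lambda>i. i \<otimes>\<^bsub>M\<^esub> x) ` I) (a \<otimes>\<^bsub>M\<^esub> x)))"

text \<open>An object of Rep(M, hat G): a finite pointed set (V, v0) with an action
act of M. The hat-G-action on V is the restriction of act to G \<union> {z}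
(g \<in> G acts as scalar g, z acts as zero).\<close>

definition is_hatG_end :: "('m, 'b) monoid_scheme \<Rightarrow> 'm set \<Rightarrow> 'v set \<Rightarrow> 'v \<Rightarrow>
    ('m \<Rightarrow> 'v \<Rightarrow> 'v) \<Rightarrow> ('v \<Rightarrow> 'v) \<Rightarrow> bool" where
  "is_hatG_end M G V v0 act f \<longleftrightarrow>
     (\<forall>v\<in>V. f v \<in> V) \<and> f v0 = v0 \<and>
     (\<forall>g\<in>G. \<forall>v\<in>V. f (act g v) = act g (f v)) \<and>
     (\<forall>v1\<in>V. \<forall>v2\<in>V. f v1 = f v2 \<and> f v1 \<noteq> v0 \<longrightarrow>
         {act g v1 | g. g \<in> G} = {act g v2 | g. g \<in> G})"

definition is_rep :: "('m, 'b) monoid_scheme \<Rightarrow> 'm set \<Rightarrow> 'm \<Rightarrow> 'v set \<Rightarrow> 'v \<Rightarrow>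
    ('m \<Rightarrow> 'v \<Rightarrow> 'v) \<Rightarrow> bool" where
  "is_rep M G z V v0 act \<longleftrightarrow>
     finite V \<and> v0 \<in> V \<and>
     (\<forall>a\<in>carrier M. \<forall>v\<in>V. act a v \<in> V) \<and>
     (\<forall>v\<in>V. act \<one>\<^bsub>M\<^esub> v = v) \<and>
     (\<forall>a\<in>carrier M. \<forall>b\<in>carrier M. \<forall>v\<in>V. act (a \<otimes>\<^bsub>M\<^esub> b) v = act a (act b v)) \<and>
     (\<forall>v\<in>V. act z v = v0) \<and>
     (\<forall>a\<in>carrier M. act a v0 = v0) \<and>
     (\<forall>g\<in>G. \<forall>v\<in>V - {v0}. act g v = v \<longrightarrow> g = \<one>\<^bsub>M\<^esub>) \<and>
     (\<forall>a\<in>carrier M. is_hatG_end M G V v0 act (act a))"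

definition end_le :: "'v set \<Rightarrow> 'v \<Rightarrow> ('v \<Rightarrow> 'v) \<Rightarrow> ('v \<Rightarrow> 'v) \<Rightarrow> bool" where
  "end_le V v0 A B \<longleftrightarrow> (\<forall>x\<in>V. A x \<noteq> v0 \<longrightarrow> B x = A x)"

text \<open>Objects of Rep(\<M>, hat G): whenever the join of I exists in M (and equals a),
the join of the V(i), i \<in> I, exists in End_hatG(V) and equals V(a); equivalently
V(a) is a least upper bound of the V(i) in End_hatG(V).\<close>
definition is_rep_ord :: "('m, 'b) monoid_scheme \<Rightarrow> 'm set \<Rightarrow> 'm \<Rightarrow> ('m \<Rightarrow> 'm \<Rightarrow> bool) \<Rightarrow>
    'v set \<Rightarrow> 'v \<Rightarrow> ('m \<Rightarrow> 'v \<Rightarrow> 'v) \<Rightarrow> bool" where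
  "is_rep_ord M G z leq V v0 act \<longleftrightarrow>
     is_rep M G z V v0 act \<and>
     (\<forall>I a. I \<subseteq> carrier M \<longrightarrow> po_lub leq (carrier M) I a \<longrightarrow>
        (\<forall>i\<in>I. end_le V v0 (act i) (act a)) \<and>
        (\<forall>B. is_hatG_end M G V v0 act B \<longrightarrow>
             (\<forall>i\<in>I. end_le V v0 (act i) B) \<longrightarrow> end_le V v0 (act a) B))"

definition complete_orth_idem :: "('m, 'b) monoid_scheme \<Rightarrow> 'm \<Rightarrow> ('m \<Rightarrow> 'm \<Rightarrow> bool) \<Rightarrow> 'm set \<Rightarrow> bool" where
  "complete_orth_idem M z leq E \<longleftrightarrow>
     finite E \<and> E \<subseteq> carrier M \<and>
     (\<forall>e1\<in>E. \<forall>e2\<in>E. e1 \<otimes>\<^bsub>M\<^esub> e2 = (if e1 = e2 then e2 else z)) \<and>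
     po_lub leq (carrier M) E \<one>\<^bsub>M\<^esub>"

text \<open>Vectors of V \<otimes> k: functions V \<rightarrow> k supported on the basis V - {v0}.\<close>
definition tens_vecs :: "'v set \<Rightarrow> 'v \<Rightarrow> ('v \<Rightarrow> 'k::field) set" where
  "tens_vecs V v0 = {x. \<forall>w. w \<notin> V - {v0} \<longrightarrow> x w = 0}"

text \<open>Linear action of a \<in> M on V \<otimes> k: basis vector v \<mapsto> a v if a v \<noteq> 0, else 0.\<close>
definition tens_act :: "'v set \<Rightarrow> 'v \<Rightarrow> ('m \<Rightarrow> 'v \<Rightarrow> 'v) \<Rightarrow> 'm \<Rightarrow> ('v \<Rightarrow> 'k::field) \<Rightarrow> 'v \<Rightarrow> 'k" where
  "tens_act V v0 act a x w =
     (if w \<in> V - {v0} then (\<Sum>v\<in>{v\<in>V - {v0}. act a v = w}. x v) else 0)"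

text \<open>V \<otimes> k is a k[\<M>]-module: the k[M]-action annihilates the generators
a - \<Sum>_{e\<in>E} a e and a - \<Sum>_{e\<in>E} e a of the defining ideal of k[\<M>].\<close>
definition is_kMord_module :: "('m, 'b) monoid_scheme \<Rightarrow> 'm \<Rightarrow> ('m \<Rightarrow> 'm \<Rightarrow> bool) \<Rightarrow>
    'v set \<Rightarrow> 'v \<Rightarrow> ('m \<Rightarrow> 'v \<Rightarrow> 'v) \<Rightarrow> 'k::field itself \<Rightarrow> bool" where
  "is_kMord_module M z leq V v0 act _ \<longleftrightarrow>
     (\<forall>a\<in>carrier M. \<forall>E. complete_orth_idem M z leq E \<longrightarrow>
        (\<forall>x::'v \<Rightarrow> 'k. x \<in> tens_vecs V v0 \<longrightarrow>
           tens_act V v0 act a x = (\<lambda>w. \<Sum>e\<in>E. tens_act V v0 act (a \<otimes>\<^bsub>M\<^esub> e) x w) \<and>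
           tens_act V v0 act a x = (\<lambda>w. \<Sum>e\<in>E. tens_act V v0 act (e \<otimes>\<^bsub>M\<^esub> a) x w)))"

end

theory Submission
  imports Defs
begin

text \<open>Let \<open>E\<close> be a complete system of orthogonal idempotents and \<open>V\<close> an object of
Rep(\<M>, hat G). Since \<open>V(e) \<le> V(1) = id\<close>, each \<open>V(e)\<close> either fixes or kills a given
basis vector. The map fixing the vectors that are not killed by all of \<open>E\<close> and killing the rest is
a hat-G-linear upper bound of the \<open>V(e)\<close>, so it dominates \<open>V(1) = id\<close>: every nonzero \<open>v\<close> is
fixed by some \<open>e \<in> E\<close>, and by orthogonality by exactly one. Hence the sum of the \<open>V(e)\<close> acts as
the identity on \<open>V \<otimes> k\<close>, which gives the relations \<open>a = \<Sum>\<^sub>e a e = \<Sum>\<^sub>e e a\<close>.\<close>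

lemma rep_finite: "is_rep M G z V v0 act \<Longrightarrow> finite V"
  by (simp add: is_rep_def)

lemma rep_base_mem: "is_rep M G z V v0 act \<Longrightarrow> v0 \<in> V"
  by (simp add: is_rep_def)

lemma rep_act_closed: "is_rep M G z V v0 act \<Longrightarrow> a \<in> carrier M \<Longrightarrow> v \<in> V \<Longrightarrow> act a v \<in> V"
  by (simp add: is_rep_def)

lemma rep_act_one: "is_rep M G z V v0 act \<Longrightarrow> v \<in> V \<Longrightarrow> act \<one>\<^bsub>M\<^esub> v = v"
  by (simp add: is_rep_def)

lemma rep_act_mult:
  "is_rep M G z V v0 act \<Longrightarrow> a \<in> carrier M \<Longrightarrow> b \<in> carrier M \<Longrightarrow> v \<in> V \<Longrightarrow>
    act (a \<otimes>\<^bsub>M\<^esub> b) v = act a (act b v)"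
  by (simp add: is_rep_def)

lemma rep_act_zero: "is_rep M G z V v0 act \<Longrightarrow> v \<in> V \<Longrightarrow> act z v = v0"
  by (simp add: is_rep_def)

lemma rep_act_base: "is_rep M G z V v0 act \<Longrightarrow> a \<in> carrier M \<Longrightarrow> act a v0 = v0"
  by (simp add: is_rep_def)

lemma rep_act_scalar_commute:
  "is_rep M G z V v0 act \<Longrightarrow> a \<in> carrier M \<Longrightarrow> g \<in> G \<Longrightarrow> v \<in> V \<Longrightarrow>
    act a (act g v) = act g (act a v)"
  unfolding is_rep_def is_hatG_end_def by blast

lemma rep_ord_below_one_fixes:
  assumes R: "is_rep_ord M G z leq V v0 act"
    and I: "I \<subseteq> carrier M" "po_lub leq (carrier M) I \<one>\<^bsub>M\<^esub>"
    and e: "e \<in> I" and u: "u \<in> V" "act e u \<noteq> v0"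
  shows "act e u = u"
proof -
  have "end_le V v0 (act e) (act \<one>\<^bsub>M\<^esub>)"
    using R I e unfolding is_rep_ord_def by blast
  then have "act \<one>\<^bsub>M\<^esub> u = act e u"
    using u unfolding end_le_def by blast
  moreover have "is_rep M G z V v0 act"
    using R unfolding is_rep_ord_def by blast
  ultimately show ?thesis
    using u rep_act_one by metis
qed

definition support_proj :: "'m set \<Rightarrow> 'v \<Rightarrow> ('m \<Rightarrow> 'v \<Rightarrow> 'v) \<Rightarrow> 'v \<Rightarrow> 'v" where
  "support_proj E v0 act u = (if \<exists>e\<in>E. act e u \<noteq> v0 then u else v0)"

lemma support_proj_hatG_end:
  assumes rep: "is_rep M G z V v0 act"
    and G: "G \<subseteq> carrier M" and E: "E \<subseteq> carrier M"
    and idem_fixes: "\<And>e u. e \<in> E \<Longrightarrow> u \<in> V \<Longrightarrow> act e u \<noteq> v0 \<Longrightarrow> act e u = u"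
  shows "is_hatG_end M G V v0 act (support_proj E v0 act)"
  unfolding is_hatG_end_def
proof (intro conjI ballI allI impI)
  fix g u assume g: "g \<in> G" and u: "u \<in> V"
  have commute: "act e (act g u) = act g (act e u)" if "e \<in> E" for e
    using rep_act_scalar_commute[OF rep] that E g u by blast
  show "support_proj E v0 act (act g u) = act g (support_proj E v0 act u)"
  proof (cases "\<exists>e\<in>E. act e u \<noteq> v0")
    case True
    then obtain e where "e \<in> E" "act e u \<noteq> v0" by blast
    then have "act e (act g u) = act g u"
      using commute idem_fixes u by metis
    then show ?thesis
      using True \<open>e \<in> E\<close> unfolding support_proj_def by auto
  next
    case False
    then have "\<forall>e\<in>E. act e (act g u) = v0"
      using commute rep_act_base[OF rep] g G by auto
    then show ?thesis
      using False rep_act_base[OF rep] g G unfolding support_proj_def by auto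
  qed
qed (use rep_base_mem[OF rep] in \<open>auto simp: support_proj_def split: if_splits\<close>)

lemma rep_ord_idem_cover:
  assumes R: "is_rep_ord M G z leq V v0 act" and G: "G \<subseteq> carrier M"
    and E: "E \<subseteq> carrier M" "po_lub leq (carrier M) E \<one>\<^bsub>M\<^esub>"
    and v: "v \<in> V" "v \<noteq> v0"
  shows "\<exists>e\<in>E. act e v = v"
proof -
  have rep: "is_rep M G z V v0 act"
    using R unfolding is_rep_ord_def by blast
  note idem_fixes = rep_ord_below_one_fixes[OF R E]
  have "\<forall>e\<in>E. end_le V v0 (act e) (support_proj E v0 act)"
    using idem_fixes unfolding end_le_def support_proj_def by fastforce
  moreover have "is_hatG_end M G V v0 act (support_proj E v0 act)"
    using support_proj_hatG_end[OF rep G E(1)] idem_fixes by blast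
  ultimately have "end_le V v0 (act \<one>\<^bsub>M\<^esub>) (support_proj E v0 act)"
    using R E unfolding is_rep_ord_def by blast
  then have "support_proj E v0 act v = v"
    using v rep_act_one[OF rep] unfolding end_le_def by simp
  then obtain e where "e \<in> E" "act e v \<noteq> v0"
    using v unfolding support_proj_def by (auto split: if_splits)
  then show ?thesis
    using idem_fixes v by blast
qed

lemma orth_idem_fix_unique:
  assumes rep: "is_rep M G z V v0 act" and E: "complete_orth_idem M z leq E"
    and e: "e \<in> E" "act e v = v" and e': "e' \<in> E" "act e' v = v"
    and v: "v \<in> V" "v \<noteq> v0"
  shows "e = e'"
proof (rule ccontr)
  assume "e \<noteq> e'"
  then have "e \<otimes>\<^bsub>M\<^esub> e' = z"
    using E e e' unfolding complete_orth_idem_def by auto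
  moreover have "act (e \<otimes>\<^bsub>M\<^esub> e') v = act e (act e' v)"
    using rep_act_mult[OF rep] E e(1) e'(1) v(1) unfolding complete_orth_idem_def by blast
  ultimately have "act z v = v"
    using e e' by simp
  then show False
    using rep_act_zero[OF rep] v by simp
qed

lemma sum_orth_idem_act:
  fixes f :: "'v \<Rightarrow> 'a::comm_monoid_add"
  assumes R: "is_rep_ord M G z leq V v0 act" and G: "G \<subseteq> carrier M"
    and E: "complete_orth_idem M z leq E"
    and u: "u \<in> V" and f: "f v0 = 0"
  shows "(\<Sum>e\<in>E. f (act e u)) = f u"
proof -
  have rep: "is_rep M G z V v0 act"
    using R unfolding is_rep_ord_def by blast
  have Ec: "finite E" "E \<subseteq> carrier M" "po_lub leq (carrier M) E \<one>\<^bsub>M\<^esub>"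
    using E unfolding complete_orth_idem_def by auto
  show ?thesis
  proof (cases "u = v0")
    case True
    then show ?thesis
      using f rep_act_base[OF rep] Ec by (simp add: subset_iff)
  next
    case False
    then obtain e0 where e0: "e0 \<in> E" "act e0 u = u"
      using rep_ord_idem_cover[OF R G Ec(2,3) u] by blast
    have "act e u = v0" if "e \<in> E - {e0}" for e
      using rep_ord_below_one_fixes[OF R Ec(2,3), of e u] orth_idem_fix_unique[OF rep E _ _ e0]
        that u False by blast
    then have "(\<Sum>e\<in>E - {e0}. f (act e u)) = 0"
      using f by simp
    moreover have "(\<Sum>e\<in>E. f (act e u)) = f (act e0 u) + (\<Sum>e\<in>E - {e0}. f (act e u))"
      by (rule sum.remove[OF Ec(1) e0(1)])
    ultimately show ?thesis
      using e0(2) by simp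
  qed
qed

lemma tens_act_as_sum:
  assumes "finite V"
  shows "tens_act V v0 act b x w =
    (if w \<in> V - {v0} then \<Sum>v\<in>V - {v0}. if act b v = w then x v else 0 else 0)"
  unfolding tens_act_def by (simp only: sum.inter_filter[OF finite_Diff[OF assms]])

lemma sum_tens_act_cong:
  fixes x :: "'v \<Rightarrow> 'k::field"
  assumes V: "finite V"
    and pointwise: "\<And>v. v \<in> V - {v0} \<Longrightarrow> w \<noteq> v0 \<Longrightarrow>
      (\<Sum>e\<in>E. if act (c e) v = w then x v else 0) = (if act a v = w then x v else 0)"
  shows "(\<Sum>e\<in>E. tens_act V v0 act (c e) x w) = tens_act V v0 act a x w"
proof (cases "w \<in> V - {v0}")
  case True
  then have "(\<Sum>e\<in>E. tens_act V v0 act (c e) x w)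
      = (\<Sum>v\<in>V - {v0}. \<Sum>e\<in>E. if act (c e) v = w then x v else 0)"
    by (simp add: tens_act_as_sum[OF V] sum.swap[of _ E])
  also have "\<dots> = (\<Sum>v\<in>V - {v0}. if act a v = w then x v else 0)"
    using True pointwise by (intro sum.cong) auto
  finally show ?thesis
    using True by (simp add: tens_act_as_sum[OF V])
next
  case False
  then show ?thesis
    by (simp only: tens_act_as_sum[OF V] if_False sum.neutral_const)
qed

theorem mainTheorem16:
  fixes M :: "('m, 'b) monoid_scheme" and G :: "'m set" and z :: 'm
    and leq :: "'m \<Rightarrow> 'm \<Rightarrow> bool"
    and V :: "'v set" and v0 :: 'v and act :: "'m \<Rightarrow> 'v \<Rightarrow> 'v"
  assumes "hatG_linear_monoid M G z"
    and "ordered_monoid_ok M z leq"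
    and "is_rep_ord M G z leq V v0 act"
  shows "is_kMord_module M z leq V v0 act TYPE('k::field)"
  unfolding is_kMord_module_def
proof (intro ballI allI impI conjI ext)
  fix a E w and x :: "'v \<Rightarrow> 'k"
  assume a: "a \<in> carrier M" and E: "complete_orth_idem M z leq E"
  have G: "G \<subseteq> carrier M"
    using assms(1) unfolding hatG_linear_monoid_def by blast
  have rep: "is_rep M G z V v0 act"
    using assms(3) unfolding is_rep_ord_def by blast
  have Ec: "E \<subseteq> carrier M"
    using E unfolding complete_orth_idem_def by blast
  note sum_idem = sum_orth_idem_act[OF assms(3) G E]
  show "tens_act V v0 act a x w = (\<Sum>e\<in>E. tens_act V v0 act (a \<otimes>\<^bsub>M\<^esub> e) x w)"
    using a Ec rep_act_base[OF rep a] sum_idem[of _ "\<lambda>u. if act a u = w then x _ else 0"]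
    by (intro sum_tens_act_cong[symmetric] rep_finite[OF rep])
       (auto simp: rep_act_mult[OF rep] subset_iff)
  show "tens_act V v0 act a x w = (\<Sum>e\<in>E. tens_act V v0 act (e \<otimes>\<^bsub>M\<^esub> a) x w)"
    using a Ec rep_act_closed[OF rep a] sum_idem[of _ "\<lambda>u. if u = w then x _ else 0"]
    by (intro sum_tens_act_cong[symmetric] rep_finite[OF rep])
       (auto simp: rep_act_mult[OF rep] subset_iff)
qed

end
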